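(* Let $u\colon\mathbb{R}^{n+1}\times[0,\infty)\to\mathbb{R}$ be a graphical solution to mean curvature flow, $\dot u=\sqrt{1+|Du|^2}\,\mathrm{div}\!\left(\frac{Du}{\sqrt{1+|Du|^2}}\right)$, and let $M\ge1$ be such that $|Du(x,t)|\le M$ for all $(x,t)$ with $u(x,t)\le0$. Fix $x_0\in\mathbb{R}^{n+1}$ and $t_1,t_2\ge0$. If $u(x_0,t_1)\le-1$ or $u(x_0,t_2)\le-1$, then $|t_1-t_2|\ge\frac{1}{8(n+1)M^2}$ or \[\frac{|u(x_0,t_1)-u(x_0,t_2)|}{\sqrt{|t_1-t_2|}}\le\sqrt{2(n+1)}\,(M+1).\] *)

theory Defs
  imports "HOL-Analysis.Analysis"
begin

text \<open>Euclidean space R^{n+1} is modelled as real^'n, with n+1 = CARD('n).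
  A time-dependent function is u :: real^'n => real => real, u x t = u(x,t).\<close>

definition grad :: "(real^'n \<Rightarrow> real) \<Rightarrow> real^'n \<Rightarrow> real^'n" where
  "grad f x = (\<chi> i. frechet_derivative f (at x) (axis i 1))"

definition divergence :: "(real^'n \<Rightarrow> real^'n) \<Rightarrow> real^'n \<Rightarrow> real" where
  "divergence F x = (\<Sum>i\<in>UNIV. frechet_derivative F (at x) (axis i 1) $ i)"

definition mcf_graph_solution :: "(real^'n \<Rightarrow> real \<Rightarrow> real) \<Rightarrow> bool" where
  "mcf_graph_solution u \<longleftrightarrow>
     continuous_on (UNIV \<times> {0..}) (\<lambda>(x,t). u x t) \<and>
     (\<forall>x t. t \<ge> 0 \<longrightarrow> (\<lambda>y. u y t) differentiable (at x)) \<and>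
     continuous_on (UNIV \<times> {0..}) (\<lambda>(x,t). grad (\<lambda>y. u y t) x) \<and>
     (\<forall>x t. t > 0 \<longrightarrow> (\<lambda>y. grad (\<lambda>z. u z t) y) differentiable (at x)) \<and>
     (\<forall>x t. t > 0 \<longrightarrow> (\<lambda>s. u x s) differentiable (at t)) \<and>
     (\<forall>x t. t > 0 \<longrightarrow>
        deriv (\<lambda>s. u x s) t =
          sqrt (1 + (norm (grad (\<lambda>y. u y t) x))\<^sup>2) *
          divergence (\<lambda>y. (1 / sqrt (1 + (norm (grad (\<lambda>z. u z t) y))\<^sup>2)) *\<^sub>R grad (\<lambda>z. u z t) y) x)"

end

(*
  A paraboloid W(x,t) = \<alpha> + \<beta>/2 |x - p|\<^sup>2 + K t with K > (n+1)\<beta> can never touch a graphical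
  solution of mean curvature flow from above for the first time: at a first touching point the
  spatial Hessian of the solution is at most \<beta>, so the equation
  u\<^sub>t = tr D\<^sup>2u - \<langle>D\<^sup>2u q, q\<rangle>, q = Du / \<surd>(1 + |Du|\<^sup>2), gives u\<^sub>t \<le> (n+1)\<beta>, while touching
  forces u\<^sub>t \<ge> K.

  Where u \<le> 0 the gradient bound makes u grow at most linearly with slope M along rays, and
  M r \<le> h + M\<^sup>2 r\<^sup>2 / (4h) turns this linear bound into a paraboloid with \<beta> = M\<^sup>2 / (2h) that lies
  above u on a ball initially and on its boundary sphere as long as the barrier stays below 0.
  Comparison then gives u(x\<^sub>0, t + \<tau>) \<le> u(x\<^sub>0, t) + h + (n+1) M\<^sup>2 \<tau> / (2h), and the optimal
  h yields the increment M \<surd>(2(n+1)\<tau>); the condition 8(n+1)M\<^sup>2\<tau> < 1 keeps everything in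
  the region u < 0 when u(x\<^sub>0, \<cdot>) \<le> -1 at one of the two times. The reverse inequality is the same
  argument for -u, which again solves the flow.
*)

theory Submission
  imports Defs
begin

section \<open>Linear growth from a slope bound\<close>

lemma nonpos_if_decreasing_at_zeros:
  fixes h h' :: "real \<Rightarrow> real"
  assumes der: "\<And>r. DERIV h r :> h' r"
    and h0: "h 0 \<le> 0"
    and zeros: "\<And>r. 0 \<le> r \<Longrightarrow> r \<le> L \<Longrightarrow> h r = 0 \<Longrightarrow> h' r < 0"
    and r: "0 \<le> r1" "r1 \<le> L"
  shows "h r1 \<le> 0"
proof (rule ccontr)
  assume pos: "\<not> h r1 \<le> 0"
  have cont: "continuous_on UNIV h"
    using der by (meson DERIV_isCont continuous_at_imp_continuous_on)
  define S where "S = {0..r1} \<inter> {r. h r \<le> 0}"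
  have "compact S"
    unfolding S_def by (intro compact_Int_closed closed_Collect_le continuous_intros cont compact_Icc)
  moreover have "0 \<in> S" using h0 r unfolding S_def by auto
  ultimately obtain rs where rs: "rs \<in> S" and rs_max: "\<forall>y\<in>S. y \<le> rs"
    using compact_attains_sup by blast
  have rs_r1: "rs < r1" using rs pos unfolding S_def by (cases "rs = r1") auto
  have above: "h y > 0" if "rs < y" "y \<le> r1" for y
  proof (rule ccontr)
    assume "\<not> h y > 0"
    hence "y \<in> S" using that rs unfolding S_def by auto
    thus False using rs_max that by force
  qed
  have "h rs = 0"
  proof (rule ccontr)
    assume "h rs \<noteq> 0"
    hence "h rs < 0" using rs unfolding S_def by auto
    moreover have "isCont h rs" using der DERIV_isCont by blast
    ultimately have "eventually (\<lambda>y. h y < 0) (at rs)"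
      using order_tendstoD(2) unfolding isCont_def by blast
    then obtain d where d: "d > 0" "\<And>y. y \<noteq> rs \<Longrightarrow> dist y rs < d \<Longrightarrow> h y < 0"
      unfolding eventually_at by auto
    define y where "y = min (rs + d/2) r1"
    have "rs < y" "y \<le> r1" "h y < 0"
      using d rs_r1 unfolding y_def dist_real_def by auto
    thus False using above by force
  qed
  then obtain d where d: "d > 0" "\<And>e. e > 0 \<Longrightarrow> e < d \<Longrightarrow> h (rs + e) < h rs"
    using DERIV_neg_dec_right[OF der] zeros rs r unfolding S_def by force
  define e where "e = min (d/2) (r1 - rs)"
  have "e > 0" "e < d" "rs + e \<le> r1" using d rs_r1 unfolding e_def by auto
  thus False using d(2) above \<open>h rs = 0\<close> by force
qed

lemma linear_bound_if_slope_bounded_below_level: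
  fixes g g' :: "real \<Rightarrow> real"
  assumes der: "\<And>r. DERIV g r :> g' r"
    and g0: "g 0 \<le> y0" and M: "M \<ge> 0" and L: "y0 + M * L < c"
    and slope: "\<And>r. 0 \<le> r \<Longrightarrow> r \<le> L \<Longrightarrow> y0 + M * r \<le> g r \<Longrightarrow> g r < c \<Longrightarrow> g' r \<le> M"
    and r: "0 \<le> r" "r \<le> L"
  shows "g r \<le> y0 + M * r"
proof (rule ccontr)
  assume "\<not> g r \<le> y0 + M * r"
  define D where "D = g r - y0 - M * r"
  have D: "D > 0" using \<open>\<not> g r \<le> y0 + M * r\<close> unfolding D_def by simp
  define gap where "gap = c - (y0 + M * L)"
  have gap: "gap > 0" using L unfolding gap_def by simp
  \<comment> \<open>Compare with the slightly steeper line of slope \<open>M + e\<close>, which stays below level \<open>c\<close> on \<open>[0, L]\<close>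
     and which \<open>g\<close> can only cross downwards.\<close>
  define e where "e = min (D / (r + 1)) (gap / (L + 1))"
  have L0: "L \<ge> 0" using r by simp
  have e0: "e > 0" using D gap r L0 unfolding e_def by auto
  have "e * r < D"
  proof -
    have "e * r \<le> D / (r + 1) * r" using r e0 unfolding e_def by (intro mult_right_mono) auto
    also have "\<dots> < D" using D r by (simp add: field_simps)
    finally show ?thesis .
  qed
  have eL: "e * L < gap"
  proof -
    have "e * L \<le> gap / (L + 1) * L" using L0 e0 unfolding e_def by (intro mult_right_mono) auto
    also have "\<dots> < gap" using gap L0 by (simp add: field_simps)
    finally show ?thesis .
  qed
  have "g r - y0 - (M + e) * r \<le> 0"
  proof (rule nonpos_if_decreasing_at_zeros[where h = "\<lambda>s. g s - y0 - (M + e) * s" and L = L])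
    show "DERIV (\<lambda>s. g s - y0 - (M + e) * s) s :> g' s - (M + e)" for s
      by (auto intro!: derivative_eq_intros der)
    fix s assume s: "0 \<le> s" "s \<le> L" "g s - y0 - (M + e) * s = 0"
    have "(M + e) * s \<le> (M + e) * L" using s M e0 by (intro mult_left_mono) auto
    hence "g s < c" using s eL unfolding gap_def by (simp add: algebra_simps)
    moreover have "y0 + M * s \<le> g s" using s e0 by (simp add: algebra_simps)
    ultimately have "g' s \<le> M" using slope s by auto
    thus "g' s - (M + e) < 0" using e0 by simp
  qed (use g0 r in auto)
  thus False using \<open>e * r < D\<close> unfolding D_def by (simp add: algebra_simps)
qed

lemma linear_apply_eq_sum_axis:
  fixes D :: "real^'n \<Rightarrow> 'b::real_vector"
  assumes "linear D"
  shows "D w = (\<Sum>i\<in>UNIV. w $ i *\<^sub>R D (axis i 1))"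
proof -
  have "D w = D (\<Sum>i\<in>UNIV. w $ i *\<^sub>R axis i 1)"
    using basis_expansion[of w] by (simp add: scalar_mult_eq_scaleR)
  thus ?thesis using assms by (simp add: linear_sum linear_scale)
qed

lemma grad_has_derivative:
  fixes f :: "real^'n \<Rightarrow> real"
  assumes "f differentiable (at x)"
  shows "(f has_derivative (\<lambda>w. grad f x \<bullet> w)) (at x)"
proof -
  let ?D = "frechet_derivative f (at x)"
  have D: "(f has_derivative ?D) (at x)" using assms frechet_derivative_works by blast
  have "?D w = grad f x \<bullet> w" for w
    unfolding linear_apply_eq_sum_axis[OF has_derivative_linear[OF D], of w] grad_def inner_vec_def
    by (simp add: mult.commute)
  hence "?D = (\<lambda>w. grad f x \<bullet> w)" by (simp add: fun_eq_iff)
  thus ?thesis using D by simp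
qed

lemma DERIV_along_line:
  fixes f :: "real^'n \<Rightarrow> real"
  assumes "f differentiable (at (p + r *\<^sub>R d))"
  shows "DERIV (\<lambda>r. f (p + r *\<^sub>R d)) r :> grad f (p + r *\<^sub>R d) \<bullet> d"
proof -
  have line: "((\<lambda>r::real. p + r *\<^sub>R d) has_derivative (\<lambda>h. h *\<^sub>R d)) (at r)"
    by (auto intro!: derivative_eq_intros)
  have "((\<lambda>r. f (p + r *\<^sub>R d)) has_derivative (\<lambda>h. grad f (p + r *\<^sub>R d) \<bullet> (h *\<^sub>R d))) (at r)"
    using has_derivative_compose[OF line grad_has_derivative[OF assms]] .
  thus ?thesis unfolding has_field_derivative_def by (simp add: mult.commute[of _ "_ \<bullet> d"])
qed

lemma le_add_mult_dist_if_grad_bounded_below_level: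
  fixes f :: "real^'n \<Rightarrow> real"
  assumes diff: "\<And>y. f differentiable (at y)"
    and grad_le: "\<And>y. a \<le> f y \<Longrightarrow> f y < c \<Longrightarrow> norm (grad f y) \<le> M"
    and M: "M \<ge> 0" and p: "f p \<le> y0" "a \<le> y0" and L: "y0 + M * L < c" "dist p x \<le> L"
  shows "f x \<le> y0 + M * dist p x"
proof -
  obtain d where d: "norm d \<le> 1" "x = p + dist p x *\<^sub>R d"
  proof (cases "x = p")
    case False
    show ?thesis
      by (rule that[of "(1 / dist p x) *\<^sub>R (x - p)"])
        (use False in \<open>auto simp: dist_norm norm_minus_commute\<close>)
  qed (use that[of 0] in simp)
  have "f (p + dist p x *\<^sub>R d) \<le> y0 + M * dist p x"
  proof (rule linear_bound_if_slope_bounded_below_level[OF DERIV_along_line[OF diff] _ M L(1)])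
    fix r assume r: "0 \<le> r" "y0 + M * r \<le> f (p + r *\<^sub>R d)" "f (p + r *\<^sub>R d) < c"
    have "a \<le> f (p + r *\<^sub>R d)" using p(2) M r(1,2) by (smt (verit) mult_nonneg_nonneg)
    hence "norm (grad f (p + r *\<^sub>R d)) \<le> M" using grad_le r(3) by blast
    moreover have "grad f (p + r *\<^sub>R d) \<bullet> d \<le> norm (grad f (p + r *\<^sub>R d)) * norm d"
      by (rule norm_cauchy_schwarz)
    ultimately show "grad f (p + r *\<^sub>R d) \<bullet> d \<le> M"
      using d(1) M by (smt (verit) mult_left_le norm_ge_zero)
  qed (use p L in auto)
  thus ?thesis using d(2) by simp
qed

section \<open>A trace inequality\<close>

lemma sum_quadratic_form_wedges:
  fixes D :: "real^'n \<Rightarrow> real^'n" and q :: "real^'n"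
  assumes lin: "linear D"
  defines "w k l \<equiv> q$k *\<^sub>R axis l 1 - q$l *\<^sub>R axis k (1::real)"
  shows "(\<Sum>k\<in>UNIV. \<Sum>l\<in>UNIV. D (w k l) \<bullet> w k l)
           = 2 * (q \<bullet> q) * (\<Sum>i\<in>UNIV. D (axis i 1) $ i) - 2 * (D q \<bullet> q)"
proof -
  define H where "H k l = D (axis l 1) $ k" for k l
  have Dw: "D (w k l) \<bullet> w k l = q$k * q$k * H l l - q$k * q$l * H k l - q$l * q$k * H l k + q$l * q$l * H k k"
    for k l
    using lin unfolding w_def H_def
    by (simp add: linear_diff linear_scale inner_diff_left inner_diff_right inner_axis algebra_simps)
  have Dq: "D q \<bullet> q = (\<Sum>k\<in>UNIV. \<Sum>l\<in>UNIV. q$k * q$l * H k l)"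
    unfolding linear_apply_eq_sum_axis[OF lin, of q] H_def inner_vec_def
    by (simp add: sum_distrib_left sum_distrib_right mult.commute mult.left_commute)
  have qq: "q \<bullet> q = (\<Sum>k\<in>UNIV. q$k * q$k)" unfolding inner_vec_def by simp
  have "(\<Sum>k\<in>UNIV. \<Sum>l\<in>UNIV. D (w k l) \<bullet> w k l)
      = (\<Sum>k\<in>UNIV. \<Sum>l\<in>UNIV. q$k * q$k * H l l) - (\<Sum>k\<in>UNIV. \<Sum>l\<in>UNIV. q$k * q$l * H k l)
        - (\<Sum>k\<in>UNIV. \<Sum>l\<in>UNIV. q$l * q$k * H l k) + (\<Sum>k\<in>UNIV. \<Sum>l\<in>UNIV. q$l * q$l * H k k)"
    unfolding Dw by (simp add: sum.distrib sum_subtractf)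
  also have "\<dots> = 2 * (q \<bullet> q) * (\<Sum>i\<in>UNIV. H i i) - 2 * (D q \<bullet> q)"
  proof -
    have a: "(\<Sum>k\<in>UNIV. \<Sum>l\<in>UNIV. q$k * q$k * H l l) = (q \<bullet> q) * (\<Sum>i\<in>UNIV. H i i)"
      unfolding qq sum_product ..
    have b: "(\<Sum>k\<in>UNIV. \<Sum>l\<in>UNIV. q$l * q$l * H k k) = (q \<bullet> q) * (\<Sum>i\<in>UNIV. H i i)"
      unfolding qq sum_product by (rule sum.swap)
    have c: "(\<Sum>k\<in>UNIV. \<Sum>l\<in>UNIV. q$l * q$k * H l k) = D q \<bullet> q"
      unfolding Dq by (rule sum.swap)
    show ?thesis unfolding a b c Dq[symmetric] by simp
  qed
  finally show ?thesis unfolding H_def .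
qed

lemma trace_sub_quadratic_form_le:
  fixes D :: "real^'n \<Rightarrow> real^'n" and \<beta> :: real
  assumes lin: "linear D"
    and bound: "\<And>w. D w \<bullet> w \<le> \<beta> * (w \<bullet> w)"
    and q: "q \<bullet> q \<le> 1" and \<beta>: "\<beta> \<ge> 0"
  shows "(\<Sum>i\<in>UNIV. D (axis i 1) $ i) - D q \<bullet> q \<le> real CARD('n) * \<beta>"
proof -
  define T where "T = (\<Sum>i\<in>UNIV. D (axis i 1) $ i)"
  define w where "w k l = q$k *\<^sub>R axis l 1 - q$l *\<^sub>R axis k (1::real)" for k l
  have "T \<le> (\<Sum>i\<in>(UNIV::'n set). \<beta>)"
    unfolding T_def using bound[of "axis _ 1"] by (intro sum_mono) (simp add: inner_axis inner_axis_axis)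
  hence T: "T \<le> real CARD('n) * \<beta>" by simp
  \<comment> \<open>The vectors \<open>w k l\<close> satisfy \<open>\<Sum> w w\<^sup>T = 2 (|q|\<^sup>2 I - q q\<^sup>T)\<close>, so summing the hypothesis over them
     bounds \<open>|q|\<^sup>2 tr D - \<langle>D q, q\<rangle>\<close>; the remaining \<open>(1 - |q|\<^sup>2) tr D\<close> is bounded on the diagonal.\<close>
  have "(\<Sum>k\<in>UNIV. \<Sum>l\<in>UNIV. D (w k l) \<bullet> w k l) \<le> (\<Sum>k\<in>UNIV. \<Sum>l\<in>UNIV. \<beta> * (w k l \<bullet> w k l))"
    using bound by (intro sum_mono)
  also have "\<dots> = \<beta> * (2 * (q \<bullet> q) * real CARD('n) - 2 * (q \<bullet> q))"
  proof -
    have "(\<Sum>k\<in>UNIV. \<Sum>l\<in>UNIV. id (w k l) \<bullet> w k l)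
        = 2 * (q \<bullet> q) * (\<Sum>i\<in>(UNIV::'n set). id (axis i 1) $ i) - 2 * (id q \<bullet> q)"
      unfolding w_def by (rule sum_quadratic_form_wedges[OF linear_id])
    thus ?thesis by (simp flip: sum_distrib_left)
  qed
  finally have "(q \<bullet> q) * T - D q \<bullet> q \<le> \<beta> * ((q \<bullet> q) * real CARD('n) - q \<bullet> q)"
    using sum_quadratic_form_wedges[OF lin, of q] by (simp only: w_def[symmetric] T_def[symmetric])
      (simp add: algebra_simps)
  moreover have "(1 - q \<bullet> q) * T \<le> (1 - q \<bullet> q) * (real CARD('n) * \<beta>)"
    using T q by (intro mult_left_mono) auto
  ultimately show ?thesis
    using mult_nonneg_nonneg[OF \<beta> inner_ge_zero[of q]] unfolding T_def by (simp add: algebra_simps)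
qed

section \<open>Maximum principle for paraboloid barriers\<close>

lemma second_derivative_nonpos_at_local_max:
  fixes f f' :: "real \<Rightarrow> real"
  assumes der: "\<And>t. DERIV f t :> f' t"
    and der2: "DERIV f' 0 :> d"
    and \<delta>: "\<delta> > 0"
    and max: "\<And>t. \<bar>t\<bar> < \<delta> \<Longrightarrow> f t \<le> f 0"
  shows "d \<le> 0"
proof (rule ccontr)
  assume "\<not> d \<le> 0"
  hence "d > 0" by simp
  then obtain d' where d': "d' > 0" "\<And>h. h > 0 \<Longrightarrow> h < d' \<Longrightarrow> f' 0 < f' h"
    using DERIV_pos_inc_right[OF der2] by fastforce
  have "f' 0 = 0"
    using DERIV_local_max[OF der \<delta>] max by auto
  define h where "h = min d' \<delta> / 2"
  have h: "h > 0" "h < d'" "h < \<delta>" using d' \<delta> unfolding h_def by auto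
  obtain z where z: "0 < z" "z < h" "f h - f 0 = (h - 0) * f' z"
    using MVT2[OF h(1), of f f'] der by blast
  have "f' z > 0" using d'(2)[of z] z h \<open>f' 0 = 0\<close> by auto
  hence "f h > f 0" using z h by (simp add: algebra_simps)
  thus False using max[of h] h by auto
qed

lemma DERIV_nonneg_at_left_local_max:
  fixes f :: "real \<Rightarrow> real"
  assumes der: "DERIV f t :> l"
    and \<delta>: "\<delta> > 0"
    and max: "\<And>s. t - \<delta> < s \<Longrightarrow> s \<le> t \<Longrightarrow> f s \<le> f t"
  shows "l \<ge> 0"
proof (rule ccontr)
  assume "\<not> l \<ge> 0"
  then obtain d where d: "d > 0" "\<And>h. h > 0 \<Longrightarrow> h < d \<Longrightarrow> f t < f (t - h)"
    using DERIV_neg_dec_left[OF der] by force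
  define h where "h = min d \<delta> / 2"
  have "h > 0" "h < d" "h < \<delta>" using d \<delta> unfolding h_def by auto
  thus False using d(2)[of h] max[of "t - h"] by auto
qed

lemma hessian_le_at_paraboloid_local_max:
  fixes g :: "real^'n \<Rightarrow> real"
  assumes diff: "\<And>y. g differentiable (at y)"
    and D: "(grad g has_derivative D) (at x)"
    and \<delta>: "\<delta> > 0"
    and max: "\<And>y. dist y x < \<delta> \<Longrightarrow>
                g y - \<beta> / 2 * (norm (y - p))\<^sup>2 \<le> g x - \<beta> / 2 * (norm (x - p))\<^sup>2"
  shows "D w \<bullet> w \<le> \<beta> * (w \<bullet> w)"
proof -
  define a where "a = x - p"
  have sq: "(norm (x + \<tau> *\<^sub>R w - p))\<^sup>2 = a \<bullet> a + 2 * \<tau> * (a \<bullet> w) + \<tau>\<^sup>2 * (w \<bullet> w)" for \<tau>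
    unfolding power2_norm_eq_inner a_def
    by (simp add: inner_add_left inner_add_right inner_diff_left inner_diff_right
        algebra_simps power2_eq_square inner_commute)
  define f where "f \<tau> = g (x + \<tau> *\<^sub>R w) - \<beta> / 2 * (a \<bullet> a + 2 * \<tau> * (a \<bullet> w) + \<tau>\<^sup>2 * (w \<bullet> w))" for \<tau>
  define f' where "f' \<tau> = grad g (x + \<tau> *\<^sub>R w) \<bullet> w - \<beta> * (a \<bullet> w + \<tau> * (w \<bullet> w))" for \<tau>
  have der: "DERIV f \<tau> :> f' \<tau>" for \<tau>
    unfolding f_def f'_def
    by (auto intro!: derivative_eq_intros DERIV_along_line diff simp: algebra_simps)
  have der2: "DERIV f' 0 :> D w \<bullet> w - \<beta> * (w \<bullet> w)"
  proof -
    have line: "((\<lambda>\<tau>::real. x + \<tau> *\<^sub>R w) has_derivative (\<lambda>h. h *\<^sub>R w)) (at 0)"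
      by (auto intro!: derivative_eq_intros)
    have "((\<lambda>\<tau>. grad g (x + \<tau> *\<^sub>R w)) has_derivative (\<lambda>h. D (h *\<^sub>R w))) (at 0)"
      using has_derivative_compose[OF line] D by simp
    hence "((\<lambda>\<tau>. grad g (x + \<tau> *\<^sub>R w) \<bullet> w) has_derivative (\<lambda>h. h * (D w \<bullet> w))) (at 0)"
      using has_derivative_inner_left linear_scale[OF has_derivative_linear[OF D]] by fastforce
    hence "DERIV (\<lambda>\<tau>. grad g (x + \<tau> *\<^sub>R w) \<bullet> w) 0 :> D w \<bullet> w"
      unfolding has_field_derivative_def by (simp add: mult.commute[of _ "D w \<bullet> w"])
    thus ?thesis unfolding f'_def by (auto intro!: derivative_eq_intros simp: algebra_simps)
  qed
  define d where "d = \<delta> / (norm w + 1)"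
  have d: "d > 0" using \<delta> unfolding d_def by (simp add: add_nonneg_pos)
  have "f \<tau> \<le> f 0" if "\<bar>\<tau>\<bar> < d" for \<tau>
  proof -
    have "dist (x + \<tau> *\<^sub>R w) x = \<bar>\<tau>\<bar> * norm w" by (simp add: dist_norm)
    also have "\<dots> \<le> \<bar>\<tau>\<bar> * (norm w + 1)" by (simp add: mult_left_mono)
    also have "\<dots> < \<delta>"
    proof -
      have "norm w + 1 > 0" by (simp add: add_nonneg_pos)
      thus ?thesis using that unfolding d_def by (simp add: less_divide_eq)
    qed
    finally show ?thesis using max[of "x + \<tau> *\<^sub>R w"] sq[of \<tau>] sq[of 0] unfolding f_def by simp
  qed
  hence "D w \<bullet> w - \<beta> * (w \<bullet> w) \<le> 0"
    using second_derivative_nonpos_at_local_max[OF der der2 d] by blast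
  thus ?thesis by simp
qed

lemma normalized_field_has_derivative:
  fixes G :: "real^'n \<Rightarrow> real^'n"
  assumes G: "(G has_derivative D) (at x)"
  defines "r \<equiv> 1 + (norm (G x))\<^sup>2"
  shows "((\<lambda>y. (1 / sqrt (1 + (norm (G y))\<^sup>2)) *\<^sub>R G y) has_derivative
           (\<lambda>h. (1 / sqrt r) *\<^sub>R D h + (- (G x \<bullet> D h) / (r * sqrt r)) *\<^sub>R G x)) (at x)"
proof -
  have r: "r > 0" unfolding r_def by (simp add: add_pos_nonneg)
  have norm2: "((\<lambda>y. 1 + (norm (G y))\<^sup>2) has_derivative (\<lambda>h. 2 * (G x \<bullet> D h))) (at x)"
    using has_derivative_add_const[OF has_derivative_inner[OF G G], of 1]
    by (simp add: power2_norm_eq_inner add.commute inner_commute)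
  have inv_sqrt: "DERIV (\<lambda>r. 1 / sqrt r) r :> - 1 / (2 * r * sqrt r)"
    using r by (auto intro!: derivative_eq_intros simp: field_simps)
  have "((\<lambda>y. 1 / sqrt (1 + (norm (G y))\<^sup>2)) has_derivative
      (\<lambda>h. 2 * (G x \<bullet> D h) * (- 1 / (2 * r * sqrt r)))) (at x)"
    using DERIV_compose_FDERIV[OF inv_sqrt[unfolded r_def] norm2] unfolding r_def by simp
  moreover have "(\<lambda>h. 2 * (G x \<bullet> D h) * (- 1 / (2 * r * sqrt r))) = (\<lambda>h. - (G x \<bullet> D h) / (r * sqrt r))"
    by (simp add: fun_eq_iff)
  ultimately have "((\<lambda>y. 1 / sqrt (1 + (norm (G y))\<^sup>2)) has_derivative
      (\<lambda>h. - (G x \<bullet> D h) / (r * sqrt r))) (at x)"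
    by simp
  from has_derivative_scaleR[OF this G] show ?thesis unfolding r_def .
qed

lemma mean_curvature_operator_expansion:
  fixes G :: "real^'n \<Rightarrow> real^'n"
  assumes G: "(G has_derivative D) (at x)"
  defines "q \<equiv> (1 / sqrt (1 + (norm (G x))\<^sup>2)) *\<^sub>R G x"
  shows "sqrt (1 + (norm (G x))\<^sup>2) * divergence (\<lambda>y. (1 / sqrt (1 + (norm (G y))\<^sup>2)) *\<^sub>R G y) x
           = (\<Sum>i\<in>UNIV. D (axis i 1) $ i) - D q \<bullet> q"
proof -
  define p where "p = G x"
  define r where "r = 1 + (norm p)\<^sup>2"
  have r: "r > 0" unfolding r_def by (simp add: add_pos_nonneg)
  note F = normalized_field_has_derivative[OF G, folded p_def, folded r_def]
  have "sqrt r * divergence (\<lambda>y. (1 / sqrt (1 + (norm (G y))\<^sup>2)) *\<^sub>R G y) x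
      = (\<Sum>i\<in>UNIV. D (axis i 1) $ i - (p \<bullet> D (axis i 1)) * p $ i / r)"
    unfolding divergence_def frechet_derivative_at[OF F, symmetric] sum_distrib_left
    using r by (intro sum.cong) (auto simp: field_simps)
  also have "\<dots> = (\<Sum>i\<in>UNIV. D (axis i 1) $ i) - D q \<bullet> q"
  proof -
    have "D q \<bullet> q = (D p \<bullet> p) / r"
      using r unfolding q_def p_def[symmetric] r_def[symmetric] linear_scale[OF has_derivative_linear[OF G]]
      by (simp add: power2_eq_square)
    also have "\<dots> = (\<Sum>i\<in>UNIV. (p \<bullet> D (axis i 1)) * p $ i / r)"
      unfolding linear_apply_eq_sum_axis[OF has_derivative_linear[OF G], of p] inner_sum_left
      by (simp add: sum_divide_distrib inner_commute mult.commute)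
    finally show ?thesis by (simp add: sum_subtractf)
  qed
  finally show ?thesis unfolding r_def p_def .
qed

lemma mcf_speed_le_at_paraboloid_local_max:
  fixes v :: "real^'n \<Rightarrow> real \<Rightarrow> real"
  assumes sol: "mcf_graph_solution v" and t: "t > 0" and \<beta>: "\<beta> \<ge> 0" and \<delta>: "\<delta> > 0"
    and max: "\<And>y. dist y x < \<delta> \<Longrightarrow>
                v y t - \<beta> / 2 * (norm (y - p))\<^sup>2 \<le> v x t - \<beta> / 2 * (norm (x - p))\<^sup>2"
  shows "deriv (\<lambda>s. v x s) t \<le> real CARD('n) * \<beta>"
proof -
  define g where "g = (\<lambda>y. v y t)"
  have diff: "\<And>y. g differentiable (at y)"
    using sol t unfolding mcf_graph_solution_def g_def by simp
  obtain D where D: "(grad g has_derivative D) (at x)"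
    using sol t unfolding mcf_graph_solution_def g_def differentiable_def by blast
  define q where "q = (1 / sqrt (1 + (norm (grad g x))\<^sup>2)) *\<^sub>R grad g x"
  have "q \<bullet> q = (norm (grad g x))\<^sup>2 / (1 + (norm (grad g x))\<^sup>2)"
    unfolding q_def by (simp add: power2_norm_eq_inner[symmetric] power_divide)
  hence q: "q \<bullet> q \<le> 1" by (simp add: divide_le_eq_1 add_pos_nonneg)
  have "deriv (\<lambda>s. v x s) t = (\<Sum>i\<in>UNIV. D (axis i 1) $ i) - D q \<bullet> q"
    using sol t mean_curvature_operator_expansion[OF D]
    unfolding mcf_graph_solution_def g_def q_def by simp
  also have "\<dots> \<le> real CARD('n) * \<beta>"
    using trace_sub_quadratic_form_le[OF has_derivative_linear[OF D] _ q \<beta>]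
      hessian_le_at_paraboloid_local_max[OF diff D \<delta>] max
    unfolding g_def by blast
  finally show ?thesis .
qed

lemma first_touching_time:
  fixes f :: "'a::t2_space \<Rightarrow> real \<Rightarrow> real"
  assumes S: "compact S" and cont: "continuous_on (S \<times> {s..T}) (\<lambda>(x, t). f x t)"
    and init: "\<And>x. x \<in> S \<Longrightarrow> f x s < 0"
    and touch: "x \<in> S" "s \<le> t" "t \<le> T" "f x t \<ge> 0"
  obtains xs ts where "xs \<in> S" "s < ts" "ts \<le> T" "f xs ts = 0"
    "\<And>y. y \<in> S \<Longrightarrow> f y ts \<le> 0"
    "\<And>y t'. y \<in> S \<Longrightarrow> s \<le> t' \<Longrightarrow> t' < ts \<Longrightarrow> f y t' < 0"
proof -
  define C where "C = (S \<times> {s..T}) \<inter> (\<lambda>(x, t). f x t) -` {0..}"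
  have "closed C"
    unfolding C_def by (intro continuous_closed_preimage cont closed_Times compact_imp_closed[OF S]
        closed_atLeastAtMost closed_atLeast)
  hence "compact C"
    using compact_Int_closed[OF compact_Times[OF S compact_Icc[of s T]] \<open>closed C\<close>] unfolding C_def
    by (simp add: Int_left_absorb)
  moreover have "(x, t) \<in> C" using touch unfolding C_def by auto
  hence "C \<noteq> {}" by blast
  ultimately have "\<exists>z\<in>C. \<forall>y\<in>C. snd z \<le> snd y"
    by (intro continuous_attains_inf continuous_intros)
  then obtain z where z: "z \<in> C" and z_min: "\<And>y. y \<in> C \<Longrightarrow> snd z \<le> snd y" by blast
  obtain xs ts where z_eq: "z = (xs, ts)" by (cases z)
  have xs: "xs \<in> S" "s \<le> ts" "ts \<le> T" "f xs ts \<ge> 0" using z unfolding z_eq C_def by auto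
  have before: "f y t' < 0" if "y \<in> S" "s \<le> t'" "t' < ts" for y t'
  proof (rule ccontr)
    assume "\<not> f y t' < 0"
    hence "(y, t') \<in> C" using that xs unfolding C_def by auto
    thus False using z_min that unfolding z_eq by force
  qed
  have ts: "s < ts" using init[OF xs(1)] xs by (cases "ts = s") auto
  have at_ts: "f y ts \<le> 0" if y: "y \<in> S" for y
  proof -
    have "continuous_on {s..T} ((\<lambda>(x, t). f x t) \<circ> Pair y)"
      using y by (intro continuous_on_compose continuous_intros continuous_on_subset[OF cont]) auto
    hence "closed ({s..T} \<inter> (\<lambda>t'. f y t') -` {..0})"
      by (intro continuous_closed_preimage) (auto simp: o_def)
    moreover have "{s..<ts} \<subseteq> {s..T} \<inter> (\<lambda>t'. f y t') -` {..0}"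
      using before[OF y] xs by (auto simp: less_imp_le)
    ultimately have "closure {s..<ts} \<subseteq> {s..T} \<inter> (\<lambda>t'. f y t') -` {..0}"
      by (rule closure_minimal[rotated])
    thus ?thesis using ts by (auto simp: subset_iff)
  qed
  show ?thesis
    using that[OF xs(1) ts xs(3) _ at_ts before] at_ts[OF xs(1)] xs(4) by simp
qed

definition paraboloid_barrier :: "real^'n \<Rightarrow> real \<Rightarrow> real \<Rightarrow> real \<Rightarrow> real^'n \<Rightarrow> real \<Rightarrow> real" where
  "paraboloid_barrier p \<alpha> \<beta> K x t = \<alpha> + \<beta> / 2 * (norm (x - p))\<^sup>2 + K * t"

lemma mcf_le_paraboloid_barrier:
  fixes v :: "real^'n \<Rightarrow> real \<Rightarrow> real" and p :: "real^'n" and \<alpha> \<beta> K :: real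
  defines "W \<equiv> paraboloid_barrier p \<alpha> \<beta> K"
  assumes sol: "mcf_graph_solution v" and s: "0 \<le> s" and \<beta>: "\<beta> \<ge> 0"
    and K: "K > real CARD('n) * \<beta>"
    and init: "\<And>x. x \<in> cball p \<rho> \<Longrightarrow> v x s < W x s"
    and boundary: "\<And>t x. s \<le> t \<Longrightarrow> t \<le> T \<Longrightarrow> (\<forall>y\<in>cball p \<rho>. v y t \<le> W y t) \<Longrightarrow>
                     dist p x = \<rho> \<Longrightarrow> v x t < W x t"
    and x: "x \<in> cball p \<rho>" and t: "s \<le> t" "t \<le> T"
  shows "v x t \<le> W x t"
proof (rule ccontr)
  assume "\<not> v x t \<le> W x t"
  have "continuous_on (cball p \<rho> \<times> {s..T}) (\<lambda>(x, t). v x t - W x t)"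
  proof -
    have "continuous_on (cball p \<rho> \<times> {s..T}) (\<lambda>(x, t). v x t)"
      using sol s unfolding mcf_graph_solution_def by (auto intro: continuous_on_subset)
    thus ?thesis
      unfolding W_def paraboloid_barrier_def case_prod_beta by (intro continuous_intros) auto
  qed
  then obtain xs ts where xs: "xs \<in> cball p \<rho>" and ts: "s < ts" "ts \<le> T"
    and touch: "v xs ts - W xs ts = 0" and below: "\<And>y. y \<in> cball p \<rho> \<Longrightarrow> v y ts - W y ts \<le> 0"
    and before: "\<And>t'. s \<le> t' \<Longrightarrow> t' < ts \<Longrightarrow> v xs t' - W xs t' < 0"
    using first_touching_time[of "cball p \<rho>" s T "\<lambda>x t. v x t - W x t"] init x t \<open>\<not> v x t \<le> W x t\<close>
    by (smt (verit) compact_cball)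
  have "dist p xs \<noteq> \<rho>" using boundary[OF less_imp_le[OF ts(1)] ts(2)] below touch by force
  hence "dist p xs < \<rho>" using xs by simp
  define \<delta> where "\<delta> = min (\<rho> - dist p xs) (ts - s)"
  have \<delta>: "\<delta> > 0" using \<open>dist p xs < \<rho>\<close> ts unfolding \<delta>_def by simp
  have "deriv (\<lambda>t'. v xs t') ts \<le> real CARD('n) * \<beta>"
  proof (rule mcf_speed_le_at_paraboloid_local_max[OF sol _ \<beta> \<delta>])
    fix y assume "dist y xs < \<delta>"
    hence "y \<in> cball p \<rho>" using dist_triangle[of p y xs] unfolding \<delta>_def by (simp add: dist_commute)
    thus "v y ts - \<beta> / 2 * (norm (y - p))\<^sup>2 \<le> v xs ts - \<beta> / 2 * (norm (xs - p))\<^sup>2"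
      using below touch unfolding W_def paraboloid_barrier_def by force
  qed (use ts s in auto)
  moreover have "deriv (\<lambda>t'. v xs t') ts - K \<ge> 0"
  proof (rule DERIV_nonneg_at_left_local_max[OF _ \<delta>])
    have "(\<lambda>t'. v xs t') differentiable (at ts)" using sol ts s unfolding mcf_graph_solution_def by simp
    thus "DERIV (\<lambda>t'. v xs t' - W xs t') ts :> deriv (\<lambda>t'. v xs t') ts - K"
      unfolding W_def paraboloid_barrier_def
      by (auto intro!: derivative_eq_intros simp: DERIV_deriv_iff_real_differentiable)
    show "v xs t' - W xs t' \<le> v xs ts - W xs ts" if "ts - \<delta> < t'" "t' \<le> ts" for t'
    proof -
      have "s < t'" using that min.cobounded2[of "\<rho> - dist p xs" "ts - s"] unfolding \<delta>_def by linarith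
      thus ?thesis using before[of t'] touch that by (cases "t' = ts") auto
    qed
  qed
  ultimately show False using K by simp
qed

section \<open>Reflection symmetry of the flow\<close>

lemma grad_uminus:
  fixes f :: "real^'n \<Rightarrow> real"
  assumes "f differentiable (at x)"
  shows "grad (\<lambda>y. - f y) x = - grad f x"
proof -
  have "frechet_derivative (\<lambda>y. - f y) (at x) = (\<lambda>h. - frechet_derivative f (at x) h)"
    using assms by (intro frechet_derivative_at[symmetric] has_derivative_minus)
      (simp add: frechet_derivative_works)
  thus ?thesis unfolding grad_def by (simp add: vec_eq_iff)
qed

lemma divergence_uminus:
  fixes F :: "real^'n \<Rightarrow> real^'n"
  assumes "F differentiable (at x)"
  shows "divergence (\<lambda>y. - F y) x = - divergence F x"
proof -
  have "frechet_derivative (\<lambda>y. - F y) (at x) = (\<lambda>h. - frechet_derivative F (at x) h)"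
    using assms by (intro frechet_derivative_at[symmetric] has_derivative_minus)
      (simp add: frechet_derivative_works)
  thus ?thesis unfolding divergence_def by (simp add: sum_negf)
qed

lemma mcf_graph_solution_uminus:
  fixes u :: "real^'n \<Rightarrow> real \<Rightarrow> real"
  assumes sol: "mcf_graph_solution u"
  shows "mcf_graph_solution (\<lambda>x t. - u x t)"
proof -
  have diff: "\<And>x t. t \<ge> 0 \<Longrightarrow> (\<lambda>y. u y t) differentiable (at x)"
    using sol unfolding mcf_graph_solution_def by blast
  have grad_eq: "grad (\<lambda>y. - u y t) x = - grad (\<lambda>y. u y t) x" if "t \<ge> 0" for x t
    using grad_uminus[OF diff[OF that]] .
  have "continuous_on (UNIV \<times> {0..}) (\<lambda>(x, t). - grad (\<lambda>y. u y t) x)"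
    using continuous_on_minus[of _ "\<lambda>(x, t). grad (\<lambda>y. u y t) x"] sol
    unfolding mcf_graph_solution_def by (simp add: case_prod_beta)
  hence "continuous_on (UNIV \<times> {0..}) (\<lambda>(x, t). grad (\<lambda>y. - u y t) x)"
    by (rule continuous_on_cong[THEN iffD1, rotated 2]) (auto simp: grad_eq)
  moreover have "continuous_on (UNIV \<times> {0..}) (\<lambda>(x, t). - u x t)"
    using continuous_on_minus[of _ "\<lambda>(x, t). u x t"] sol
    unfolding mcf_graph_solution_def by (simp add: case_prod_beta)
  moreover have "(\<lambda>y. - u y t) differentiable (at x)" if "t \<ge> 0" for x t
    using diff[OF that] by (rule differentiable_minus)
  moreover have "(\<lambda>y. grad (\<lambda>z. - u z t) y) differentiable (at x)" if t: "t > 0" for x t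
  proof -
    have "(\<lambda>y. grad (\<lambda>z. - u z t) y) = (\<lambda>y. - grad (\<lambda>z. u z t) y)"
      using grad_eq t by (simp add: fun_eq_iff)
    thus ?thesis using sol t unfolding mcf_graph_solution_def by (simp add: differentiable_minus)
  qed
  moreover have "deriv (\<lambda>s. - u x s) t =
      sqrt (1 + (norm (grad (\<lambda>y. - u y t) x))\<^sup>2) *
      divergence (\<lambda>y. (1 / sqrt (1 + (norm (grad (\<lambda>z. - u z t) y))\<^sup>2)) *\<^sub>R grad (\<lambda>z. - u z t) y) x"
    if t: "t > 0" for x t
  proof -
    have "(\<lambda>s. u x s) differentiable (at t)" using sol t unfolding mcf_graph_solution_def by blast
    hence "deriv (\<lambda>s. - u x s) t = - deriv (\<lambda>s. u x s) t"
      by (intro DERIV_imp_deriv DERIV_minus) (simp add: DERIV_deriv_iff_real_differentiable)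
    moreover have F: "(\<lambda>y. (1 / sqrt (1 + (norm (grad (\<lambda>z. u z t) y))\<^sup>2)) *\<^sub>R grad (\<lambda>z. u z t) y)
        differentiable (at x)"
      using sol t normalized_field_has_derivative unfolding mcf_graph_solution_def differentiable_def
      by blast
    ultimately show ?thesis
      using sol t divergence_uminus[OF F] unfolding mcf_graph_solution_def grad_eq[OF less_imp_le[OF t]]
      by simp
  qed
  moreover have "(\<lambda>s. - u x s) differentiable (at t)" if "t > 0" for x t
    using sol that unfolding mcf_graph_solution_def by (simp add: differentiable_minus)
  ultimately show ?thesis unfolding mcf_graph_solution_def by blast
qed

section \<open>Time increments\<close>

lemma mcf_growth_bound_with_slack:
  fixes v :: "real^'n \<Rightarrow> real \<Rightarrow> real" and p :: "real^'n"
  defines "N \<equiv> real CARD('n)"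
  assumes sol: "mcf_graph_solution v"
    and grad_le: "\<forall>x t. t \<ge> 0 \<and> a \<le> v x t \<and> v x t < c \<longrightarrow> norm (grad (\<lambda>y. v y t) x) \<le> M"
    and M: "M > 0" and s: "s \<ge> 0" and \<tau>: "\<tau> > 0" and h: "h > 0" and e: "e > 0"
    and start: "v p s \<le> a"
    and room: "a + 2 * h + 3 * e + N * M\<^sup>2 * \<tau> / (2 * h) < c"
  shows "v p (s + \<tau>) \<le> a + h + 2 * e + N * M\<^sup>2 * \<tau> / (2 * h)"
proof -
  define \<beta> where "\<beta> = M\<^sup>2 / (2 * h)"
  define K where "K = N * \<beta> + e / \<tau>"
  define \<alpha> where "\<alpha> = a + h + e - K * s"
  define \<rho> where "\<rho> = (2 * h + e) / M"
  define W where "W = paraboloid_barrier p \<alpha> \<beta> K"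
  have \<beta>: "\<beta> \<ge> 0" unfolding \<beta>_def using h by simp
  have K: "K > N * \<beta>" unfolding K_def using e \<tau> by simp
  have K_nonneg: "K \<ge> 0" using K \<beta> unfolding N_def by (smt (verit) mult_nonneg_nonneg of_nat_0_le_iff)
  have K\<tau>: "K * \<tau> = N * M\<^sup>2 * \<tau> / (2 * h) + e" unfolding K_def \<beta>_def using \<tau> by (simp add: field_simps)
  have drift: "N * M\<^sup>2 * \<tau> / (2 * h) \<ge> 0" unfolding N_def using \<tau> h by simp
  have W: "W x t = a + h + e + \<beta> / 2 * (dist p x)\<^sup>2 + K * (t - s)" for x t
    unfolding W_def paraboloid_barrier_def \<alpha>_def by (simp add: dist_norm norm_minus_commute algebra_simps)
  have growth: "v q t \<le> b + M * dist z q"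
    if "t \<ge> 0" "v z t \<le> b" "a \<le> b" "b + M * L < c" "dist z q \<le> L" for t z q b L
    using le_add_mult_dist_if_grad_bounded_below_level[where f = "\<lambda>y. v y t"] sol grad_le M that
    unfolding mcf_graph_solution_def by (meson less_imp_le)
  have "v p (s + \<tau>) \<le> W p (s + \<tau>)"
  proof (rule mcf_le_paraboloid_barrier[OF sol s \<beta>,
        where p = p and \<alpha> = \<alpha> and K = K and \<rho> = \<rho> and T = "s + \<tau>", folded W_def])
    show "real CARD('n) * \<beta> < K" using K unfolding N_def .
  next
    fix x assume "x \<in> cball p \<rho>"
    hence "v x s \<le> a + M * dist p x"
      using growth[OF s start order_refl, where L = \<rho>] room drift e M unfolding \<rho>_def by simp
    \<comment> \<open>AM-GM: \<open>M r \<le> h + \<beta> r\<^sup>2 / 2\<close>.\<close>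
    also have "\<dots> \<le> a + h + \<beta> / 2 * (dist p x)\<^sup>2"
    proof -
      have "0 \<le> (M * dist p x - 2 * h)\<^sup>2 / (4 * h)" using h by simp
      thus ?thesis unfolding \<beta>_def using h by (simp add: power2_eq_square field_simps)
    qed
    also have "\<dots> < W x s" unfolding W using e by simp
    finally show "v x s < W x s" .
  next
    fix t x assume t: "s \<le> t" "t \<le> s + \<tau>" and below: "\<forall>y\<in>cball p \<rho>. v y t \<le> W y t"
      and x: "dist p x = \<rho>"
    \<comment> \<open>Follow the ray from \<open>x\<close> inwards to the sphere of radius \<open>2h/M\<close>, where the barrier
       equals \<open>a + 2h + e + K (t - s)\<close>, and come back to \<open>x\<close> with slope at most \<open>M\<close>.\<close>
    define \<theta> where "\<theta> = 2 * h / (2 * h + e)"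
    define y where "y = p + \<theta> *\<^sub>R (x - p)"
    have \<theta>: "0 \<le> \<theta>" "\<theta> \<le> 1" unfolding \<theta>_def using h e by auto
    have norm_x: "norm (x - p) = (2 * h + e) / M"
      using x unfolding \<rho>_def by (simp add: dist_norm norm_minus_commute)
    have "dist p y = \<theta> * norm (x - p)" unfolding y_def using \<theta> by (simp add: dist_norm)
    hence dist_y: "dist p y = 2 * h / M" unfolding norm_x \<theta>_def using h e by simp
    have "x - y = (1 - \<theta>) *\<^sub>R (x - p)" unfolding y_def by (simp add: algebra_simps)
    hence "dist y x = (1 - \<theta>) * norm (x - p)" using \<theta> by (simp add: dist_norm norm_minus_commute)
    moreover have "1 - \<theta> = e / (2 * h + e)" unfolding \<theta>_def using h e by (simp add: field_simps)
    ultimately have dist_yx: "dist y x = e / M" unfolding norm_x using h e by simp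
    have "y \<in> cball p \<rho>" using dist_y h e M unfolding \<rho>_def by (simp add: divide_right_mono)
    moreover have "W y t = a + 2 * h + e + K * (t - s)"
      using W[of y t] dist_y h M unfolding \<beta>_def by (simp add: power2_eq_square field_simps)
    ultimately have "v y t \<le> a + 2 * h + e + K * (t - s)" using below by force
    moreover have "K * (t - s) \<le> K * \<tau>" using K_nonneg t by (intro mult_left_mono) auto
    moreover have "0 \<le> K * (t - s)" using K_nonneg t by simp
    ultimately have "v x t \<le> a + 2 * h + e + K * (t - s) + M * dist y x"
      using growth[where t = t and z = y and q = x and L = "e / M" and b = "a + 2 * h + e + K * (t - s)"]
        s t room K\<tau> dist_yx e h M by simp
    also have "\<dots> < W x t"
    proof -
      have "\<beta> / 2 * (dist p x)\<^sup>2 = h + e + e\<^sup>2 / (4 * h)"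
        unfolding x \<rho>_def \<beta>_def using h M by (simp add: field_simps power2_eq_square)
      thus ?thesis using W[of x t] h e M unfolding dist_yx by simp
    qed
    finally show "v x t < W x t" .
  qed (use s \<tau> e h M in \<open>auto simp: \<rho>_def\<close>)
  thus ?thesis using W[of p "s + \<tau>"] K\<tau> by simp
qed

lemma mcf_growth_bound:
  fixes v :: "real^'n \<Rightarrow> real \<Rightarrow> real" and p :: "real^'n"
  defines "N \<equiv> real CARD('n)"
  assumes sol: "mcf_graph_solution v"
    and grad_le: "\<forall>x t. t \<ge> 0 \<and> a \<le> v x t \<and> v x t < c \<longrightarrow> norm (grad (\<lambda>y. v y t) x) \<le> M"
    and M: "M > 0" and s: "s \<ge> 0" and \<tau>: "\<tau> > 0" and h: "h > 0"
    and start: "v p s \<le> a"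
    and room: "a + 2 * h + N * M\<^sup>2 * \<tau> / (2 * h) < c"
  shows "v p (s + \<tau>) \<le> a + h + N * M\<^sup>2 * \<tau> / (2 * h)"
proof (rule field_le_epsilon)
  fix e :: real assume e: "e > 0"
  define e' where "e' = min (e / 2) ((c - (a + 2 * h + N * M\<^sup>2 * \<tau> / (2 * h))) / 4)"
  have e': "e' > 0" "2 * e' \<le> e" using e room unfolding e'_def by auto
  have "e' \<le> (c - (a + 2 * h + N * M\<^sup>2 * \<tau> / (2 * h))) / 4"
    unfolding e'_def by (rule min.cobounded2)
  hence "a + 2 * h + 3 * e' + N * M\<^sup>2 * \<tau> / (2 * h) < c" using room e'(1) by argo
  hence "v p (s + \<tau>) \<le> a + h + 2 * e' + N * M\<^sup>2 * \<tau> / (2 * h)"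
    using mcf_growth_bound_with_slack[OF sol grad_le M s \<tau> h e'(1) start] unfolding N_def by blast
  thus "v p (s + \<tau>) \<le> a + h + N * M\<^sup>2 * \<tau> / (2 * h) + e" using e' by simp
qed

lemma mcf_time_increment_le:
  fixes u :: "real^'n \<Rightarrow> real \<Rightarrow> real" and p :: "real^'n"
  defines "N \<equiv> real CARD('n)"
  assumes sol: "mcf_graph_solution u" and M: "M > 0"
    and grad_le: "\<forall>x t. t \<ge> 0 \<and> u x t \<le> 0 \<longrightarrow> norm (grad (\<lambda>y. u y t) x) \<le> M"
    and s: "s \<ge> 0" and \<tau>: "\<tau> > 0" and short: "8 * N * M\<^sup>2 * \<tau> < 1"
    and level: "u p s \<le> -1 \<or> u p (s + \<tau>) \<le> -1"
  shows "\<bar>u p s - u p (s + \<tau>)\<bar> \<le> M * sqrt (2 * N * \<tau>)"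
proof -
  have N: "N \<ge> 1" unfolding N_def by simp
  define B where "B = M * sqrt (2 * N * \<tau>)"
  define h where "h = B / 2"
  have B_h: "B = 2 * h" unfolding h_def by simp
  \<comment> \<open>This choice of \<open>h\<close> minimises the bound \<open>h + N M\<^sup>2 \<tau> / (2 h)\<close> of the growth lemma.\<close>
  have h: "h > 0" unfolding h_def B_def using M N \<tau> by simp
  have drift: "N * M\<^sup>2 * \<tau> / (2 * h) = h"
  proof -
    have "(2 * h)\<^sup>2 = 2 * N * M\<^sup>2 * \<tau>"
      unfolding h_def B_def using N \<tau> by (simp add: power_mult_distrib)
    thus ?thesis using h by (simp add: field_simps power2_eq_square)
  qed
  have "B\<^sup>2 = 2 * N * M\<^sup>2 * \<tau>" unfolding B_def power_mult_distrib using N \<tau> by simp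
  hence "B\<^sup>2 < (1 / 2)\<^sup>2" using short by (simp add: power_divide)
  hence B: "B < 1 / 2" by (rule power_less_imp_less_base) simp
  have upper: "u p (s + \<tau>) \<le> u p s + B" if "u p s \<le> -1"
    using mcf_growth_bound[OF sol _ M s \<tau> h order_refl, where c = 0 and p = p] grad_le that B
    unfolding drift N_def[symmetric] B_h by force
  \<comment> \<open>The gradient bound for \<open>-u\<close> holds where \<open>-u \<ge> 0\<close>, so no restriction on the level is needed.\<close>
  have lower: "- u p (s + \<tau>) \<le> max (- u p s) 0 + B"
  proof -
    have "norm (grad (\<lambda>y. - u y t) x) \<le> M" if "t \<ge> 0" "max (- u p s) 0 \<le> - u x t" for x t
    proof -
      have "(\<lambda>y. u y t) differentiable (at x)" using sol that(1) unfolding mcf_graph_solution_def by blast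
      thus ?thesis using grad_le that grad_uminus by fastforce
    qed
    thus ?thesis
      using mcf_growth_bound[OF mcf_graph_solution_uminus[OF sol] _ M s \<tau> h,
          where a = "max (- u p s) 0" and c = "max (- u p s) 0 + 3 * h + 1" and p = p]
      unfolding drift N_def[symmetric] B_h by force
  qed
  have "\<bar>u p s - u p (s + \<tau>)\<bar> \<le> B"
  proof (cases "u p s \<le> -1")
    case True
    thus ?thesis using upper lower by auto
  next
    case False
    thus ?thesis using level lower B by auto
  qed
  thus ?thesis unfolding B_def .
qed

theorem lemma6p1:
  fixes u :: "real^'n \<Rightarrow> real \<Rightarrow> real" and M t1 t2 :: real and x0 :: "real^'n"
  assumes "mcf_graph_solution u"
    and "M \<ge> 1"
    and "\<forall>x t. t \<ge> 0 \<and> u x t \<le> 0 \<longrightarrow> norm (grad (\<lambda>y. u y t) x) \<le> M"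
    and "t1 \<ge> 0" and "t2 \<ge> 0"
    and "u x0 t1 \<le> -1 \<or> u x0 t2 \<le> -1"
  shows "\<bar>t1 - t2\<bar> \<ge> 1 / (8 * real CARD('n) * M\<^sup>2) \<or>
         \<bar>u x0 t1 - u x0 t2\<bar> / sqrt \<bar>t1 - t2\<bar> \<le> sqrt (2 * real CARD('n)) * (M + 1)"
proof (cases "\<bar>t1 - t2\<bar> \<ge> 1 / (8 * real CARD('n) * M\<^sup>2)")
  case False
  let ?N = "real CARD('n)"
  define s where "s = min t1 t2"
  define \<tau> where "\<tau> = \<bar>t1 - t2\<bar>"
  have s: "s \<ge> 0" using assms(4,5) unfolding s_def by simp
  have "{s, s + \<tau>} = {t1, t2}" unfolding s_def \<tau>_def by auto
  hence diff: "\<bar>u x0 t1 - u x0 t2\<bar> = \<bar>u x0 s - u x0 (s + \<tau>)\<bar>"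
    and level: "u x0 s \<le> -1 \<or> u x0 (s + \<tau>) \<le> -1"
    using assms(6) by (auto simp: doubleton_eq_iff abs_minus_commute)
  have short: "8 * ?N * M\<^sup>2 * \<tau> < 1"
    using False assms(2) unfolding \<tau>_def by (simp add: field_simps)
  have "\<bar>u x0 t1 - u x0 t2\<bar> / sqrt \<tau> \<le> sqrt (2 * ?N) * (M + 1)"
  proof (cases "\<tau> = 0")
    case False
    hence \<tau>: "\<tau> > 0" unfolding \<tau>_def by simp
    have "\<bar>u x0 t1 - u x0 t2\<bar> \<le> M * sqrt (2 * ?N * \<tau>)"
      unfolding diff using mcf_time_increment_le[OF assms(1) _ assms(3) s \<tau> short level] assms(2) by simp
    also have "\<dots> \<le> sqrt (2 * ?N) * (M + 1) * sqrt \<tau>"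
      using \<tau> by (simp add: real_sqrt_mult distrib_right)
    finally show ?thesis using \<tau> by (simp add: pos_divide_le_eq)
  qed (use assms(2) in simp) \<comment> \<open>for \<open>t1 = t2\<close> the quotient is \<open>0 / 0 = 0\<close>\<close>
  thus ?thesis unfolding \<tau>_def by (rule disjI2)
qed simp

end
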